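(* Let $(X_1,X_2)$ be an extensible pair and $k\ge1$ with $\det Z_k\neq0$. Then $P(Z_k)/Q(Z_k)$ is a cyclic group. Moreover, if $u,v$ are any two adjacent nodes of $Z_k$ both lying in $B_k:=N(A_k)\cup\{\xi_1,\xi_2\}$, then the class $[\omega_u-\omega_v]$ generates $P(Z_k)/Q(Z_k)$.
   Context: A marked Dynkin diagram $(X,\xi)$ is the Dynkin diagram of a symmetrizable generalized Cartan matrix $C(X)$ with a distinguished node $\xi$; $\det X:=\det C(X)$; $X(-1)$ is $X$ with $\xi$ and incident edges deleted ($\det$ of the empty diagram is $1$); $\Delta_X=\det X-\det X(-1)$, $\Delta_i:=\Delta_{X_i}$. $(X_1,X_2)$ is an extensible pair if $\det X_i\ne0$, $\Delta_i\ne0$, $\gcd(\det X_i,\Delta_i)=1$ ($i=1,2$) and $\gcd(\Delta_1,\Delta_2)=1$. $Z_k=Z_k(X_1,X_2)$ is obtained from the disjoint union of $X_1$, a path $A_k$ with nodes $1,\dots,k$ (consecutive nodes joined by simple edges) and $X_2$, by adding simple edges $\xi_1$—$1$ and $k$—$\xi_2$. For the Kac–Moody algebra $\mathfrak g(Z_k)$ with $\det Z_k\ne0$: $\omega_p$ are the fundamental weights ($\omega_p(\check\alpha_q)=\delta_{pq}$), $P(Z_k)=\bigoplus\mathbb Z\omega_p$ is the weight lattice and $Q(Z_k)=\bigoplus\mathbb Z\alpha_p$ the root lattice. *)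

theory Defs
  imports "Jordan_Normal_Form.Determinant"
begin

text \<open>Generalized Cartan matrices are represented as square integer matrices (JNF type int mat),
  nodes of the Dynkin diagram are the indices 0..<n.\<close>

definition gcm :: "int mat \<Rightarrow> bool" where
  "gcm A \<longleftrightarrow> dim_row A = dim_col A \<and>
     (\<forall>i < dim_row A. A $$ (i, i) = 2) \<and>
     (\<forall>i < dim_row A. \<forall>j < dim_row A. i \<noteq> j \<longrightarrow> A $$ (i, j) \<le> 0) \<and>
     (\<forall>i < dim_row A. \<forall>j < dim_row A. A $$ (i, j) = 0 \<longleftrightarrow> A $$ (j, i) = 0)"

text \<open>Symmetrizable: A = D B with D positive diagonal and B symmetric.\<close>
definition symmetrizable :: "int mat \<Rightarrow> bool" where
  "symmetrizable A \<longleftrightarrow> (\<exists>d :: nat \<Rightarrow> rat. (\<forall>i < dim_row A. d i > 0) \<and>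
     (\<forall>i < dim_row A. \<forall>j < dim_row A.
        of_int (A $$ (i, j)) / d i = of_int (A $$ (j, i)) / d j))"

definition marked_diagram :: "int mat \<Rightarrow> nat \<Rightarrow> bool" where
  "marked_diagram A \<xi> \<longleftrightarrow> gcm A \<and> symmetrizable A \<and> \<xi> < dim_row A"

text \<open>X(-1): delete the distinguished node (the determinant of the empty 0x0 matrix is 1).\<close>
definition delete_node :: "int mat \<Rightarrow> nat \<Rightarrow> int mat" where
  "delete_node A \<xi> = mat (dim_row A - 1) (dim_col A - 1)
     (\<lambda>(i, j). A $$ (if i < \<xi> then i else Suc i, if j < \<xi> then j else Suc j))"

definition Delta :: "int mat \<Rightarrow> nat \<Rightarrow> int" where
  "Delta A \<xi> = det A - det (delete_node A \<xi>)"

definition extensible_pair :: "int mat \<Rightarrow> nat \<Rightarrow> int mat \<Rightarrow> nat \<Rightarrow> bool" where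
  "extensible_pair A1 \<xi>1 A2 \<xi>2 \<longleftrightarrow>
     marked_diagram A1 \<xi>1 \<and> marked_diagram A2 \<xi>2 \<and>
     det A1 \<noteq> 0 \<and> Delta A1 \<xi>1 \<noteq> 0 \<and> gcd (det A1) (Delta A1 \<xi>1) = 1 \<and>
     det A2 \<noteq> 0 \<and> Delta A2 \<xi>2 \<noteq> 0 \<and> gcd (det A2) (Delta A2 \<xi>2) = 1 \<and>
     gcd (Delta A1 \<xi>1) (Delta A2 \<xi>2) = 1"

text \<open>With n1 = dim X_1 and n2 = dim X_2, the nodes are:
  0..<n1 the nodes of X_1; n1 + (i-1) the node i of A_k (1 \<le> i \<le> k);
  n1 + k + j the node j of X_2.\<close>
definition Zk :: "int mat \<Rightarrow> nat \<Rightarrow> int mat \<Rightarrow> nat \<Rightarrow> nat \<Rightarrow> int mat" where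
  "Zk A1 \<xi>1 A2 \<xi>2 k =
    (let n1 = dim_row A1; n2 = dim_row A2; N = n1 + k + n2 in
     mat N N (\<lambda>(i, j).
       if i < n1 \<and> j < n1 then A1 $$ (i, j)
       else if n1 + k \<le> i \<and> n1 + k \<le> j then A2 $$ (i - (n1 + k), j - (n1 + k))
       else if n1 \<le> i \<and> i < n1 + k \<and> n1 \<le> j \<and> j < n1 + k then
         (if i = j then 2 else if i = Suc j \<or> j = Suc i then -1 else 0)
       else if (i = \<xi>1 \<and> j = n1) \<or> (i = n1 \<and> j = \<xi>1) then -1
       else if (i = n1 + k - 1 \<and> j = n1 + k + \<xi>2) \<or> (i = n1 + k + \<xi>2 \<and> j = n1 + k - 1) then -1
       else 0))"

text \<open>Weight lattice P = \<oplus> Z \<omega>_p, identified with Z^N via coordinates w.r.t. the fundamental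
  weights; \<omega>_p is the p-th unit vector. Since alpha_q(coroot_p) = a_pq, we have
  \<alpha>_q = \<Sum>_p a_pq \<omega>_p, i.e. \<alpha>_q is the q-th column of the Cartan matrix.\<close>
definition weight_lattice :: "int mat \<Rightarrow> int vec set" where
  "weight_lattice A = carrier_vec (dim_row A)"

definition fund_weight :: "int mat \<Rightarrow> nat \<Rightarrow> int vec" where
  "fund_weight A p = unit_vec (dim_row A) p"

definition simple_root :: "int mat \<Rightarrow> nat \<Rightarrow> int vec" where
  "simple_root A q = col A q"

definition root_lattice :: "int mat \<Rightarrow> int vec set" where
  "root_lattice A = {A *\<^sub>v c | c. c \<in> carrier_vec (dim_col A)}"

definition generates_quotient :: "int mat \<Rightarrow> int vec \<Rightarrow> bool" where
  "generates_quotient A g \<longleftrightarrow>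
     (\<forall>x \<in> weight_lattice A. \<exists>m :: int. x - of_int m \<cdot>\<^sub>v g \<in> root_lattice A)"

definition quotient_cyclic :: "int mat \<Rightarrow> bool" where
  "quotient_cyclic A \<longleftrightarrow> (\<exists>g \<in> weight_lattice A. generates_quotient A g)"

definition adjacent :: "int mat \<Rightarrow> nat \<Rightarrow> nat \<Rightarrow> bool" where
  "adjacent A u v \<longleftrightarrow> u < dim_row A \<and> v < dim_row A \<and> u \<noteq> v \<and> A $$ (u, v) \<noteq> 0"

definition B_nodes :: "int mat \<Rightarrow> nat \<Rightarrow> int mat \<Rightarrow> nat \<Rightarrow> nat \<Rightarrow> nat set" where
  "B_nodes A1 \<xi>1 A2 \<xi>2 k = {dim_row A1 ..< dim_row A1 + k} \<union> {\<xi>1, dim_row A1 + k + \<xi>2}"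

end

theory Submission
  imports Defs
begin

text \<open>Work modulo L = Q + \<int>g, where g = \<omega>_u - \<omega>_v. The simple roots at the nodes of
  A_k are second differences of fundamental weights along the path \<xi>1, 1, ..., k, \<xi>2, so all
  consecutive differences along it are congruent modulo Q; one of them is \<plusminus>g, hence every
  weight on the path is congruent to \<omega>_\<xi>1 modulo L. Modulo this congruence the columns of
  X_i become the columns of C(X_i) with the corner entry at \<xi>_i lowered by 1, whose determinant
  is \<Delta>_i; multiplying by the adjugate gives \<Delta>_i \<omega>_r \<in> L for all nodes r of X_i.
  As gcd(\<Delta>_1, \<Delta>_2) = 1 this puts \<omega>_\<xi>1, hence every weight on the path, in L. Now the
  columns of X_i give det X_i \<omega>_r \<in> L too, and gcd(det X_i, \<Delta>_i) = 1 gives \<omega>_r \<in> L.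
  So L = P.\<close>

definition \<omega> :: "nat \<Rightarrow> nat \<Rightarrow> int" where
  "\<omega> p i = (if i = p then 1 else 0)"

text \<open>Q + \<int>g in coordinates with respect to the fundamental weights; coordinates from
  dim_row A on are unconstrained.\<close>
definition root_lattice_plus :: "int mat \<Rightarrow> (nat \<Rightarrow> int) \<Rightarrow> (nat \<Rightarrow> int) set" where
  "root_lattice_plus A g = {h. \<exists>c m. \<forall>i < dim_row A.
     h i = (\<Sum>j < dim_row A. A $$ (i, j) * c j) + m * g i}"

lemma root_lattice_plus_add:
  assumes "h1 \<in> root_lattice_plus A g" and "h2 \<in> root_lattice_plus A g"
  shows "(\<lambda>i. h1 i + h2 i) \<in> root_lattice_plus A g"
proof -
  obtain c1 m1 c2 m2 where
    "\<forall>i < dim_row A. h1 i = (\<Sum>j < dim_row A. A $$ (i, j) * c1 j) + m1 * g i"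
    "\<forall>i < dim_row A. h2 i = (\<Sum>j < dim_row A. A $$ (i, j) * c2 j) + m2 * g i"
    using assms unfolding root_lattice_plus_def by blast
  then have combination: "\<forall>i < dim_row A. h1 i + h2 i
      = (\<Sum>j < dim_row A. A $$ (i, j) * (c1 j + c2 j)) + (m1 + m2) * g i"
    by (simp add: distrib_left distrib_right sum.distrib)
  then show ?thesis unfolding root_lattice_plus_def by (intro CollectI exI) (rule combination)
qed

lemma root_lattice_plus_smult:
  assumes "h \<in> root_lattice_plus A g"
  shows "(\<lambda>i. a * h i) \<in> root_lattice_plus A g"
proof -
  obtain c m where "\<forall>i < dim_row A. h i = (\<Sum>j < dim_row A. A $$ (i, j) * c j) + m * g i"
    using assms unfolding root_lattice_plus_def by blast
  then have combination: "\<forall>i < dim_row A. a * h i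
      = (\<Sum>j < dim_row A. A $$ (i, j) * (a * c j)) + (a * m) * g i"
    by (simp add: distrib_left sum_distrib_left mult_ac)
  then show ?thesis unfolding root_lattice_plus_def by (intro CollectI exI) (rule combination)
qed

lemma root_lattice_plus_diff:
  assumes "h1 \<in> root_lattice_plus A g" and "h2 \<in> root_lattice_plus A g"
  shows "(\<lambda>i. h1 i - h2 i) \<in> root_lattice_plus A g"
  using root_lattice_plus_add[OF assms(1) root_lattice_plus_smult[OF assms(2), of "-1"]] by simp

lemma root_lattice_plus_cong:
  assumes "h \<in> root_lattice_plus A g" and "\<And>i. i < dim_row A \<Longrightarrow> h i = h' i"
  shows "h' \<in> root_lattice_plus A g"
proof -
  obtain c m where "\<forall>i < dim_row A. h i = (\<Sum>j < dim_row A. A $$ (i, j) * c j) + m * g i"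
    using assms(1) unfolding root_lattice_plus_def by blast
  then have combination: "\<forall>i < dim_row A. h' i = (\<Sum>j < dim_row A. A $$ (i, j) * c j) + m * g i"
    using assms(2) by simp
  then show ?thesis unfolding root_lattice_plus_def by (intro CollectI exI) (rule combination)
qed

lemma root_lattice_plus_zero: "(\<lambda>i. 0) \<in> root_lattice_plus A g"
  unfolding root_lattice_plus_def by (intro CollectI exI[of _ "\<lambda>j. 0"] exI[of _ 0]) simp

lemma root_lattice_plus_sum:
  assumes "finite I" and "\<And>x. x \<in> I \<Longrightarrow> h x \<in> root_lattice_plus A g"
  shows "(\<lambda>i. \<Sum>x \<in> I. h x i) \<in> root_lattice_plus A g"
  using assms
  by (induction I rule: finite_induct) (auto intro: root_lattice_plus_zero root_lattice_plus_add)

lemma root_lattice_plus_col: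
  assumes "q < dim_row A" and "\<And>i. i < dim_row A \<Longrightarrow> A $$ (i, q) = h i"
  shows "h \<in> root_lattice_plus A g"
proof (rule root_lattice_plus_cong[OF _ assms(2)])
  show "(\<lambda>i. A $$ (i, q)) \<in> root_lattice_plus A g"
    unfolding root_lattice_plus_def using assms(1)
    by (intro CollectI exI[of _ "\<omega> q"] exI[of _ 0])
      (simp add: \<omega>_def if_distrib[of "\<lambda>t. _ * t"] cong: if_cong)
qed

lemma root_lattice_plus_generator: "g \<in> root_lattice_plus A g"
  unfolding root_lattice_plus_def by (intro CollectI exI[of _ "\<lambda>j. 0"] exI[of _ 1]) simp

lemma root_lattice_plus_coprime:
  assumes "gcd a b = 1"
    and "(\<lambda>i. a * h i) \<in> root_lattice_plus A g" and "(\<lambda>i. b * h i) \<in> root_lattice_plus A g"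
  shows "h \<in> root_lattice_plus A g"
proof -
  obtain s t where st: "s * a + t * b = 1" using bezout_int[of a b] assms(1) by metis
  have "(\<lambda>i. s * (a * h i) + t * (b * h i)) \<in> root_lattice_plus A g"
    using root_lattice_plus_add[OF root_lattice_plus_smult[OF assms(2)]
        root_lattice_plus_smult[OF assms(3)]] .
  moreover have "s * (a * h i) + t * (b * h i) = h i" for i
    using st by (metis distrib_right mult.assoc mult_1)
  ultimately show ?thesis by simp
qed

lemma det_minus_corner:
  fixes A :: "int mat"
  assumes A: "A \<in> carrier_mat n n" and x: "x < n"
  shows "det (mat n n (\<lambda>(p, q). A $$ (p, q) - (if p = x \<and> q = x then t else 0)))
         = det A - t * det (delete_node A x)"
proof -
  define B where "B = mat n n (\<lambda>(p, q). A $$ (p, q) - (if p = x \<and> q = x then t else 0))"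
  have B: "B \<in> carrier_mat n n" unfolding B_def by simp
  have "mat_delete B i x = mat_delete A i x" for i
    using A unfolding mat_delete_def B_def by (intro eq_matI) auto
  then have "cofactor B i x = cofactor A i x" for i
    unfolding cofactor_def by simp
  then have "det B = (\<Sum>i<n. (A $$ (i, x) - (if i = x then t else 0)) * cofactor A i x)"
    using laplace_expansion_column[OF B x] x by (simp add: B_def)
  also have "\<dots> = (\<Sum>i<n. A $$ (i, x) * cofactor A i x) - t * cofactor A x x"
    using x by (simp add: left_diff_distrib sum_subtractf if_distrib[of "\<lambda>s. s * _"] cong: if_cong)
  also have "\<dots> = det A - t * det (delete_node A x)"
    using laplace_expansion_column[OF A x]
    by (simp add: cofactor_def delete_node_def mat_delete_def)
  finally show ?thesis unfolding B_def .
qed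

text \<open>Multiplying by the adjugate of B.\<close>
lemma root_lattice_plus_det_smult:
  assumes B: "B \<in> carrier_mat n n" and r: "r < n"
    and cols: "\<And>q. q < n \<Longrightarrow> (\<lambda>i. \<Sum>p<n. B $$ (p, q) * \<omega> (f p) i) \<in> root_lattice_plus A g"
  shows "(\<lambda>i. det B * \<omega> (f r) i) \<in> root_lattice_plus A g"
proof -
  have "(\<lambda>i. \<Sum>q<n. adj_mat B $$ (q, r) * (\<Sum>p<n. B $$ (p, q) * \<omega> (f p) i))
      \<in> root_lattice_plus A g"
    by (intro root_lattice_plus_sum root_lattice_plus_smult cols) auto
  moreover have "(\<Sum>q<n. adj_mat B $$ (q, r) * (\<Sum>p<n. B $$ (p, q) * \<omega> (f p) i))
      = det B * \<omega> (f r) i" for i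
  proof -
    have "(\<Sum>q<n. adj_mat B $$ (q, r) * (\<Sum>p<n. B $$ (p, q) * \<omega> (f p) i))
        = (\<Sum>p<n. (\<Sum>q<n. B $$ (p, q) * adj_mat B $$ (q, r)) * \<omega> (f p) i)"
      unfolding sum_distrib_left sum_distrib_right mult.assoc
      by (subst sum.swap) (simp add: mult_ac)
    also have "\<dots> = (\<Sum>p<n. (B * adj_mat B) $$ (p, r) * \<omega> (f p) i)"
      using B adj_mat(1)[OF B] r
      by (intro sum.cong refl) (auto simp: scalar_prod_def atLeast0LessThan)
    also have "\<dots> = (\<Sum>p<n. (if p = r then det B else 0) * \<omega> (f p) i)"
      using B r by (intro sum.cong refl) (auto simp: adj_mat(2)[OF B])
    also have "\<dots> = det B * \<omega> (f r) i"
      using r by (simp add: if_distrib[of "\<lambda>t. t * _"] cong: if_cong)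
    finally show ?thesis .
  qed
  ultimately show ?thesis by simp
qed

text \<open>The hypothesis cols says that B is attached through its node x to an outside node y.
  Modulo \<omega> y \<equiv> t \<omega> (f x) the corner entry of B at x drops by t.\<close>
lemma root_lattice_plus_attached_block:
  assumes B: "B \<in> carrier_mat n n" and x: "x < n" and r: "r < n"
    and cols: "\<And>q. q < n \<Longrightarrow>
      (\<lambda>i. (\<Sum>p<n. B $$ (p, q) * \<omega> (f p) i) - (if q = x then \<omega> y i else 0)) \<in> root_lattice_plus A g"
    and attachment: "(\<lambda>i. \<omega> y i - t * \<omega> (f x) i) \<in> root_lattice_plus A g"
  shows "(\<lambda>i. (det B - t * det (delete_node B x)) * \<omega> (f r) i) \<in> root_lattice_plus A g"
proof -
  define B' where "B' = mat n n (\<lambda>(p, q). B $$ (p, q) - (if p = x \<and> q = x then t else 0))"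
  have "(\<lambda>i. det B' * \<omega> (f r) i) \<in> root_lattice_plus A g"
  proof (rule root_lattice_plus_det_smult[OF _ r])
    show "B' \<in> carrier_mat n n" by (simp add: B'_def)
    fix q assume q: "q < n"
    have "(\<lambda>i. if q = x then \<omega> y i - t * \<omega> (f x) i else 0) \<in> root_lattice_plus A g"
      using attachment root_lattice_plus_zero by (cases "q = x") simp_all
    from root_lattice_plus_add[OF cols[OF q] this]
    show "(\<lambda>i. \<Sum>p<n. B' $$ (p, q) * \<omega> (f p) i) \<in> root_lattice_plus A g"
      by (rule root_lattice_plus_cong)
        (use q x in \<open>simp add: B'_def left_diff_distrib sum_subtractf
          if_distrib[of "\<lambda>s. s * _"] cong: if_cong\<close>)
  qed
  then show ?thesis
    using det_minus_corner[OF B x] by (simp add: B'_def)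
qed

lemma root_lattice_plus_attached_block_units:
  assumes B: "B \<in> carrier_mat n n" and x: "x < n" and r: "r < n"
    and cols: "\<And>q. q < n \<Longrightarrow>
      (\<lambda>i. (\<Sum>p<n. B $$ (p, q) * \<omega> (f p) i) - (if q = x then \<omega> y i else 0)) \<in> root_lattice_plus A g"
    and coprime: "gcd (det B) (Delta B x) = 1"
    and y: "\<omega> y \<in> root_lattice_plus A g"
    and attachment: "(\<lambda>i. \<omega> y i - \<omega> (f x) i) \<in> root_lattice_plus A g"
  shows "\<omega> (f r) \<in> root_lattice_plus A g"
proof (rule root_lattice_plus_coprime[OF coprime])
  show "(\<lambda>i. det B * \<omega> (f r) i) \<in> root_lattice_plus A g"
    using root_lattice_plus_attached_block[OF B x r cols, of 0] y by simp
  show "(\<lambda>i. Delta B x * \<omega> (f r) i) \<in> root_lattice_plus A g"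
    using root_lattice_plus_attached_block[OF B x r cols, of 1] attachment by (simp add: Delta_def)
qed

lemma root_lattice_plus_chain:
  assumes second_differences: "\<And>m. 1 \<le> m \<Longrightarrow> m \<le> K \<Longrightarrow>
      (\<lambda>i. 2 * \<omega> (c m) i - \<omega> (c (m - 1)) i - \<omega> (c (Suc m)) i) \<in> root_lattice_plus A g"
    and j: "j \<le> K" and step: "(\<lambda>i. \<omega> (c (Suc j)) i - \<omega> (c j) i) \<in> root_lattice_plus A g"
    and m: "m \<le> Suc K"
  shows "(\<lambda>i. \<omega> (c m) i - \<omega> (c 0) i) \<in> root_lattice_plus A g"
proof -
  define D where "D l = (\<lambda>i. \<omega> (c (Suc l)) i - \<omega> (c l) i)" for l
  have D_iff_D0: "D l \<in> root_lattice_plus A g \<longleftrightarrow> D 0 \<in> root_lattice_plus A g" if "l \<le> K" for l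
    using that
  proof (induction l)
    case 0
    then show ?case by simp
  next
    case (Suc l)
    have "(\<lambda>i. D l i - D (Suc l) i) \<in> root_lattice_plus A g"
      by (rule root_lattice_plus_cong[OF second_differences[of "Suc l"]])
        (use Suc.prems in \<open>auto simp: D_def\<close>)
    then have "D (Suc l) \<in> root_lattice_plus A g \<longleftrightarrow> D l \<in> root_lattice_plus A g"
      using root_lattice_plus_add[of _ A g "D (Suc l)"] root_lattice_plus_diff[of "D l" A g]
      by fastforce
    with Suc show ?case by simp
  qed
  have "D l \<in> root_lattice_plus A g" if "l \<le> K" for l
    using D_iff_D0[OF that] D_iff_D0[OF j] step by (simp add: D_def)
  then have "(\<lambda>i. \<Sum>l<m. D l i) \<in> root_lattice_plus A g"
    using m by (intro root_lattice_plus_sum) auto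
  then show ?thesis
    unfolding D_def sum_lessThan_telescope[of "\<lambda>l. \<omega> (c l) _"] .
qed

lemma generates_quotient_if_omega_mem:
  assumes square: "dim_col A = dim_row A" and g: "g \<in> carrier_vec (dim_row A)"
    and units: "\<And>p. p < dim_row A \<Longrightarrow> \<omega> p \<in> root_lattice_plus A (\<lambda>i. g $ i)"
  shows "generates_quotient A g"
  unfolding generates_quotient_def
proof
  fix x assume "x \<in> weight_lattice A"
  then have x: "x \<in> carrier_vec (dim_row A)"
    by (simp add: weight_lattice_def)
  have "(\<lambda>i. \<Sum>p < dim_row A. x $ p * \<omega> p i) \<in> root_lattice_plus A (\<lambda>i. g $ i)"
    by (intro root_lattice_plus_sum root_lattice_plus_smult units) auto
  then have "(\<lambda>i. x $ i) \<in> root_lattice_plus A (\<lambda>i. g $ i)"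
    by (rule root_lattice_plus_cong) (simp add: \<omega>_def if_distrib[of "\<lambda>t. _ * t"] cong: if_cong)
  then obtain c m where c: "\<forall>i < dim_row A. x $ i = (\<Sum>j < dim_row A. A $$ (i, j) * c j) + m * g $ i"
    unfolding root_lattice_plus_def by blast
  have "x - of_int m \<cdot>\<^sub>v g = A *\<^sub>v vec (dim_row A) c"
    by (rule eq_vecI) (use x g square c in \<open>auto simp: scalar_prod_def atLeast0LessThan\<close>)
  moreover have "vec (dim_row A) c \<in> carrier_vec (dim_col A)"
    using square by simp
  ultimately show "\<exists>m. x - of_int m \<cdot>\<^sub>v g \<in> root_lattice A"
    unfolding root_lattice_def by blast
qed

text \<open>The nodes of B_k in path order: \<xi>1 (m = 0), the nodes 1..k of A_k, then \<xi>2 (m = k + 1).\<close>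
definition B_path :: "int mat \<Rightarrow> nat \<Rightarrow> nat \<Rightarrow> nat \<Rightarrow> nat \<Rightarrow> nat" where
  "B_path A1 \<xi>1 \<xi>2 k m =
     (if m = 0 then \<xi>1 else if m \<le> k then dim_row A1 + m - 1 else dim_row A1 + k + \<xi>2)"

lemma dim_Zk [simp]:
  "dim_row (Zk A1 \<xi>1 A2 \<xi>2 k) = dim_row A1 + k + dim_row A2"
  "dim_col (Zk A1 \<xi>1 A2 \<xi>2 k) = dim_row A1 + k + dim_row A2"
  unfolding Zk_def Let_def by simp_all

context
  fixes A1 A2 :: "int mat" and \<xi>1 \<xi>2 k :: nat
  assumes \<xi>1: "\<xi>1 < dim_row A1" and \<xi>2: "\<xi>2 < dim_row A2" and k: "1 \<le> k"
begin

lemma Zk_col_X1: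
  assumes "q < dim_row A1" and "i < dim_row A1 + k + dim_row A2"
  shows "Zk A1 \<xi>1 A2 \<xi>2 k $$ (i, q)
    = (\<Sum>p < dim_row A1. A1 $$ (p, q) * \<omega> p i) - (if q = \<xi>1 then \<omega> (dim_row A1) i else 0)"
  using assms \<xi>1 k
  by (auto simp: Zk_def Let_def \<omega>_def if_distrib[of "\<lambda>t. _ * t"] cong: if_cong)

lemma Zk_col_X2:
  assumes "q < dim_row A2" and "i < dim_row A1 + k + dim_row A2"
  shows "Zk A1 \<xi>1 A2 \<xi>2 k $$ (i, dim_row A1 + k + q)
    = (\<Sum>p < dim_row A2. A2 $$ (p, q) * \<omega> (dim_row A1 + k + p) i)
      - (if q = \<xi>2 then \<omega> (dim_row A1 + k - 1) i else 0)"
proof -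
  have "(\<Sum>p < dim_row A2. A2 $$ (p, q) * \<omega> (dim_row A1 + k + p) i)
      = (if dim_row A1 + k \<le> i then A2 $$ (i - (dim_row A1 + k), q) else 0)"
  proof (cases "dim_row A1 + k \<le> i")
    case True
    then have "(i = dim_row A1 + k + p) = (p = i - (dim_row A1 + k))" for p
      by auto
    with True assms(2) show ?thesis
      by (simp add: \<omega>_def if_distrib[of "\<lambda>t. _ * t"] cong: if_cong)
  qed (simp add: \<omega>_def)
  then show ?thesis
    using assms \<xi>1 \<xi>2 k by (auto simp: Zk_def Let_def \<omega>_def)
qed

lemma Zk_col_path:
  assumes "1 \<le> m" and "m \<le> k" and "i < dim_row A1 + k + dim_row A2"
  shows "Zk A1 \<xi>1 A2 \<xi>2 k $$ (i, B_path A1 \<xi>1 \<xi>2 k m)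
    = 2 * \<omega> (B_path A1 \<xi>1 \<xi>2 k m) i - \<omega> (B_path A1 \<xi>1 \<xi>2 k (m - 1)) i
      - \<omega> (B_path A1 \<xi>1 \<xi>2 k (Suc m)) i"
proof -
  obtain l where l: "m = Suc l" "l < k"
    using assms(1,2) by (cases m) auto
  then have column: "B_path A1 \<xi>1 \<xi>2 k m = dim_row A1 + l"
    by (simp add: B_path_def)
  consider "i < dim_row A1" | t where "i = dim_row A1 + t" "t < k" | "dim_row A1 + k \<le> i"
    by (metis add_less_cancel_left le_add_diff_inverse not_le)
  then show ?thesis
  proof cases
    case 1
    then have "Zk A1 \<xi>1 A2 \<xi>2 k $$ (i, dim_row A1 + l) = (if i = \<xi>1 \<and> l = 0 then -1 else 0)"
      using l assms(3) by (simp add: Zk_def Let_def)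
    then show ?thesis
      using 1 l column \<xi>1 by (auto simp: \<omega>_def B_path_def)
  next
    case 2
    then have "Zk A1 \<xi>1 A2 \<xi>2 k $$ (i, dim_row A1 + l)
        = (if t = l then 2 else if t = Suc l \<or> l = Suc t then -1 else 0)"
      using l by (simp add: Zk_def Let_def)
    moreover have "\<omega> (B_path A1 \<xi>1 \<xi>2 k (m - 1)) i = (if l = Suc t then 1 else 0)"
      using 2 l \<xi>1 by (auto simp: \<omega>_def B_path_def)
    moreover have "\<omega> (B_path A1 \<xi>1 \<xi>2 k (Suc m)) i = (if t = Suc l then 1 else 0)"
      using 2 l by (auto simp: \<omega>_def B_path_def)
    ultimately show ?thesis
      using 2 l column by (simp add: \<omega>_def)
  next
    case 3
    then have "Zk A1 \<xi>1 A2 \<xi>2 k $$ (i, dim_row A1 + l)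
        = (if i = dim_row A1 + k + \<xi>2 \<and> Suc l = k then -1 else 0)"
      using l assms(3) \<xi>1 by (auto simp: Zk_def Let_def)
    then show ?thesis
      using 3 l column \<xi>1 by (auto simp: \<omega>_def B_path_def)
  qed
qed

lemma root_lattice_plus_Zk_col_X1:
  assumes "q < dim_row A1"
  shows "(\<lambda>i. (\<Sum>p < dim_row A1. A1 $$ (p, q) * \<omega> p i)
      - (if q = \<xi>1 then \<omega> (B_path A1 \<xi>1 \<xi>2 k 1) i else 0)) \<in> root_lattice_plus (Zk A1 \<xi>1 A2 \<xi>2 k) g"
  using assms k by (intro root_lattice_plus_col[of q]) (simp_all add: Zk_col_X1 B_path_def)

lemma root_lattice_plus_Zk_col_X2:
  assumes "q < dim_row A2"
  shows "(\<lambda>i. (\<Sum>p < dim_row A2. A2 $$ (p, q) * \<omega> (dim_row A1 + k + p) i)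
      - (if q = \<xi>2 then \<omega> (B_path A1 \<xi>1 \<xi>2 k k) i else 0)) \<in> root_lattice_plus (Zk A1 \<xi>1 A2 \<xi>2 k) g"
  using assms k
  by (intro root_lattice_plus_col[of "dim_row A1 + k + q"]) (simp_all add: Zk_col_X2 B_path_def)

lemma root_lattice_plus_Zk_path:
  assumes j: "j \<le> k" and m: "m \<le> Suc k"
    and step: "(\<lambda>i. \<omega> (B_path A1 \<xi>1 \<xi>2 k (Suc j)) i - \<omega> (B_path A1 \<xi>1 \<xi>2 k j) i)
      \<in> root_lattice_plus (Zk A1 \<xi>1 A2 \<xi>2 k) g"
  shows "(\<lambda>i. \<omega> (B_path A1 \<xi>1 \<xi>2 k m) i - \<omega> \<xi>1 i) \<in> root_lattice_plus (Zk A1 \<xi>1 A2 \<xi>2 k) g"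
proof -
  let ?c = "B_path A1 \<xi>1 \<xi>2 k"
  have "(\<lambda>i. 2 * \<omega> (?c l) i - \<omega> (?c (l - 1)) i - \<omega> (?c (Suc l)) i)
      \<in> root_lattice_plus (Zk A1 \<xi>1 A2 \<xi>2 k) g" if l: "1 \<le> l" "l \<le> k" for l
  proof (rule root_lattice_plus_col)
    show "?c l < dim_row (Zk A1 \<xi>1 A2 \<xi>2 k)"
      using l by (simp add: B_path_def)
  qed (simp add: Zk_col_path[OF l])
  from root_lattice_plus_chain[OF this j step m] show ?thesis
    by (simp add: B_path_def)
qed

lemma Zk_neighbour_B_path_first:
  assumes "u \<in> B_nodes A1 \<xi>1 A2 \<xi>2 k" and "adjacent (Zk A1 \<xi>1 A2 \<xi>2 k) u \<xi>1"
  shows "u = dim_row A1"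
proof -
  have "dim_row A1 \<le> u" and u_less: "u < dim_row A1 + k + dim_row A2"
    using assms unfolding B_nodes_def adjacent_def by auto
  then have "(\<Sum>p < dim_row A1. A1 $$ (p, \<xi>1) * \<omega> p u) = 0"
    by (intro sum.neutral) (auto simp: \<omega>_def)
  then show ?thesis
    using assms(2) Zk_col_X1[OF \<xi>1 u_less] unfolding adjacent_def
    by (auto simp: \<omega>_def split: if_splits)
qed

lemma Zk_neighbour_B_path_inner:
  assumes "1 \<le> b" and "b \<le> k" and "adjacent (Zk A1 \<xi>1 A2 \<xi>2 k) u (B_path A1 \<xi>1 \<xi>2 k b)"
  shows "u = B_path A1 \<xi>1 \<xi>2 k (b - 1) \<or> u = B_path A1 \<xi>1 \<xi>2 k (Suc b)"
proof -
  have "u < dim_row A1 + k + dim_row A2" and "\<omega> (B_path A1 \<xi>1 \<xi>2 k b) u = 0"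
    using assms(3) unfolding adjacent_def by (auto simp: \<omega>_def)
  then show ?thesis
    using assms(3) Zk_col_path[OF assms(1,2)] unfolding adjacent_def
    by (auto simp: \<omega>_def split: if_splits)
qed

lemma Zk_neighbour_B_path_last:
  assumes "u \<in> B_nodes A1 \<xi>1 A2 \<xi>2 k" and "adjacent (Zk A1 \<xi>1 A2 \<xi>2 k) u (dim_row A1 + k + \<xi>2)"
  shows "u = dim_row A1 + k - 1"
proof -
  have "u < dim_row A1 + k" and u_less: "u < dim_row A1 + k + dim_row A2"
    using assms \<xi>1 unfolding B_nodes_def adjacent_def by auto
  then have "(\<Sum>p < dim_row A2. A2 $$ (p, \<xi>2) * \<omega> (dim_row A1 + k + p) u) = 0"
    by (intro sum.neutral) (auto simp: \<omega>_def)
  then show ?thesis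
    using assms(2) Zk_col_X2[OF \<xi>2 u_less] unfolding adjacent_def
    by (auto simp: \<omega>_def split: if_splits)
qed

lemma B_nodes_B_path:
  assumes "v \<in> B_nodes A1 \<xi>1 A2 \<xi>2 k"
  obtains b where "b \<le> Suc k" and "v = B_path A1 \<xi>1 \<xi>2 k b"
proof -
  consider "v = \<xi>1" | "v = dim_row A1 + k + \<xi>2" | "dim_row A1 \<le> v" "v < dim_row A1 + k"
    using assms unfolding B_nodes_def by fastforce
  then show ?thesis
  proof cases
    case 1
    then show ?thesis using that[of 0] by (simp add: B_path_def)
  next
    case 2
    then show ?thesis using that[of "Suc k"] by (simp add: B_path_def)
  next
    case 3
    then show ?thesis by (intro that[of "Suc (v - dim_row A1)"]) (auto simp: B_path_def)
  qed
qed

lemma adjacent_B_nodes_Zk: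
  assumes u: "u \<in> B_nodes A1 \<xi>1 A2 \<xi>2 k" and v: "v \<in> B_nodes A1 \<xi>1 A2 \<xi>2 k"
    and adj: "adjacent (Zk A1 \<xi>1 A2 \<xi>2 k) u v"
  shows "\<exists>j \<le> k. {u, v} = {B_path A1 \<xi>1 \<xi>2 k j, B_path A1 \<xi>1 \<xi>2 k (Suc j)}"
proof -
  let ?c = "B_path A1 \<xi>1 \<xi>2 k"
  obtain b where b: "b \<le> Suc k" "v = ?c b"
    using B_nodes_B_path[OF v] .
  consider "b = 0" | "1 \<le> b" "b \<le> k" | "b = Suc k"
    using b(1) by linarith
  then show ?thesis
  proof cases
    case 1
    then have "u = ?c 1"
      using Zk_neighbour_B_path_first[OF u] adj b k by (simp add: B_path_def)
    then show ?thesis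
      using b 1 by (intro exI[of _ 0]) auto
  next
    case 2
    then have "u = ?c (b - 1) \<or> u = ?c (Suc b)"
      using Zk_neighbour_B_path_inner adj b by simp
    then show ?thesis
    proof
      assume "u = ?c (b - 1)"
      then show ?thesis using b 2 by (intro exI[of _ "b - 1"]) auto
    next
      assume "u = ?c (Suc b)"
      then show ?thesis using b 2 by (intro exI[of _ b]) auto
    qed
  next
    case 3
    then have "u = ?c k"
      using Zk_neighbour_B_path_last[OF u] adj b k by (simp add: B_path_def)
    then show ?thesis
      using b 3 by (intro exI[of _ k]) auto
  qed
qed

end

lemma omega_mem_root_lattice_plus_Zk:
  assumes ext: "extensible_pair A1 \<xi>1 A2 \<xi>2" and k: "1 \<le> k" and j: "j \<le> k"
    and step: "(\<lambda>i. \<omega> (B_path A1 \<xi>1 \<xi>2 k (Suc j)) i - \<omega> (B_path A1 \<xi>1 \<xi>2 k j) i)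
      \<in> root_lattice_plus (Zk A1 \<xi>1 A2 \<xi>2 k) g"
    and p: "p < dim_row A1 + k + dim_row A2"
  shows "\<omega> p \<in> root_lattice_plus (Zk A1 \<xi>1 A2 \<xi>2 k) g"
proof -
  let ?c = "B_path A1 \<xi>1 \<xi>2 k" and ?L = "root_lattice_plus (Zk A1 \<xi>1 A2 \<xi>2 k) g"
  let ?n1 = "dim_row A1" and ?n2 = "dim_row A2"
  have \<xi>1: "\<xi>1 < ?n1" and \<xi>2: "\<xi>2 < ?n2"
    and A1: "A1 \<in> carrier_mat ?n1 ?n1" and A2: "A2 \<in> carrier_mat ?n2 ?n2"
    and coprime: "gcd (det A1) (Delta A1 \<xi>1) = 1" "gcd (det A2) (Delta A2 \<xi>2) = 1"
      "gcd (Delta A1 \<xi>1) (Delta A2 \<xi>2) = 1"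
    using ext unfolding extensible_pair_def marked_diagram_def gcm_def by auto
  note cols1 = root_lattice_plus_Zk_col_X1[OF \<xi>1 \<xi>2 k]
    and cols2 = root_lattice_plus_Zk_col_X2[OF \<xi>1 \<xi>2 k]
  note path = root_lattice_plus_Zk_path[OF \<xi>1 \<xi>2 k j _ step]
  have first_step: "(\<lambda>i. \<omega> (?c 1) i - \<omega> \<xi>1 i) \<in> ?L"
    using path[of 1] by simp
  have last_step: "(\<lambda>i. \<omega> (?c k) i - \<omega> (?n1 + k + \<xi>2) i) \<in> ?L"
    using root_lattice_plus_diff[OF path[of k] path[of "Suc k"]] by (simp add: B_path_def)
  have Delta1: "(\<lambda>i. Delta A1 \<xi>1 * \<omega> \<xi>1 i) \<in> ?L"
    using root_lattice_plus_attached_block[OF A1 \<xi>1 \<xi>1 cols1, of 1] first_step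
    by (simp add: Delta_def)
  have "(\<lambda>i. Delta A2 \<xi>2 * \<omega> (?c (Suc k)) i) \<in> ?L"
    using root_lattice_plus_attached_block[OF A2 \<xi>2 \<xi>2 cols2, of 1] last_step
    by (simp add: Delta_def B_path_def)
  from root_lattice_plus_diff[OF this
      root_lattice_plus_smult[OF path[OF le_refl], of "Delta A2 \<xi>2"]]
  have Delta2: "(\<lambda>i. Delta A2 \<xi>2 * \<omega> \<xi>1 i) \<in> ?L"
    by (rule root_lattice_plus_cong) (simp add: right_diff_distrib)
  have path_units: "\<omega> (?c m) \<in> ?L" if "m \<le> Suc k" for m
    using root_lattice_plus_add[OF path[OF that]
        root_lattice_plus_coprime[OF coprime(3) Delta1 Delta2]]
    by simp
  consider "p < ?n1" | "?n1 \<le> p" "p < ?n1 + k" | r where "p = ?n1 + k + r" "r < ?n2"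
    using p by (metis add_less_cancel_left le_add_diff_inverse not_le)
  then show ?thesis
  proof cases
    case 1
    then show ?thesis
      using root_lattice_plus_attached_block_units[OF A1 \<xi>1 1 cols1 coprime(1)
          path_units first_step]
      by simp
  next
    case 2
    then have "p = ?c (Suc (p - ?n1))" and "Suc (p - ?n1) \<le> Suc k"
      by (auto simp: B_path_def)
    then show ?thesis
      using path_units by metis
  next
    case 3
    then show ?thesis
      using root_lattice_plus_attached_block_units[OF A2 \<xi>2 3(2) cols2 coprime(2)
          path_units last_step] k
      by (simp add: B_path_def)
  qed
qed

lemma generates_quotient_Zk_adjacent:
  assumes ext: "extensible_pair A1 \<xi>1 A2 \<xi>2" and k: "1 \<le> k"
    and u: "u \<in> B_nodes A1 \<xi>1 A2 \<xi>2 k" and v: "v \<in> B_nodes A1 \<xi>1 A2 \<xi>2 k"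
    and adj: "adjacent (Zk A1 \<xi>1 A2 \<xi>2 k) u v"
  shows "generates_quotient (Zk A1 \<xi>1 A2 \<xi>2 k)
    (fund_weight (Zk A1 \<xi>1 A2 \<xi>2 k) u - fund_weight (Zk A1 \<xi>1 A2 \<xi>2 k) v)"
proof -
  let ?Z = "Zk A1 \<xi>1 A2 \<xi>2 k" and ?c = "B_path A1 \<xi>1 \<xi>2 k"
  let ?g = "fund_weight ?Z u - fund_weight ?Z v"
  let ?L = "root_lattice_plus ?Z (\<lambda>i. ?g $ i)"
  have \<xi>1: "\<xi>1 < dim_row A1" and \<xi>2: "\<xi>2 < dim_row A2"
    using ext unfolding extensible_pair_def marked_diagram_def by auto
  obtain j where j: "j \<le> k" and uv: "{u, v} = {?c j, ?c (Suc j)}"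
    using adjacent_B_nodes_Zk[OF \<xi>1 \<xi>2 k u v adj] by blast
  have "u < dim_row ?Z" and "v < dim_row ?Z"
    using adj unfolding adjacent_def by auto
  then have g: "?g $ i = \<omega> u i - \<omega> v i" if "i < dim_row ?Z" for i
    using that by (simp add: fund_weight_def \<omega>_def)
  from uv consider "u = ?c j" "v = ?c (Suc j)" | "u = ?c (Suc j)" "v = ?c j"
    by (metis doubleton_eq_iff)
  then have "(\<lambda>i. \<omega> (?c (Suc j)) i - \<omega> (?c j) i) \<in> ?L"
  proof cases
    case 1
    show ?thesis
      by (rule root_lattice_plus_cong[OF
            root_lattice_plus_smult[OF root_lattice_plus_generator, of "-1"]])
        (simp only: g, simp add: 1)
  next
    case 2
    show ?thesis
      by (rule root_lattice_plus_cong[OF root_lattice_plus_generator]) (simp only: g, simp add: 2)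
  qed
  then show ?thesis
    using omega_mem_root_lattice_plus_Zk[OF ext k j]
    by (intro generates_quotient_if_omega_mem) (auto simp: fund_weight_def)
qed

theorem lemma3p11:
  fixes A1 A2 :: "int mat" and \<xi>1 \<xi>2 k :: nat
  assumes "extensible_pair A1 \<xi>1 A2 \<xi>2"
    and "k \<ge> 1"
    and "det (Zk A1 \<xi>1 A2 \<xi>2 k) \<noteq> 0"
  shows "quotient_cyclic (Zk A1 \<xi>1 A2 \<xi>2 k) \<and>
    (\<forall>u v. u \<in> B_nodes A1 \<xi>1 A2 \<xi>2 k \<and> v \<in> B_nodes A1 \<xi>1 A2 \<xi>2 k \<and>
           adjacent (Zk A1 \<xi>1 A2 \<xi>2 k) u v \<longrightarrow>
       generates_quotient (Zk A1 \<xi>1 A2 \<xi>2 k)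
         (fund_weight (Zk A1 \<xi>1 A2 \<xi>2 k) u - fund_weight (Zk A1 \<xi>1 A2 \<xi>2 k) v))"
proof -
  let ?Z = "Zk A1 \<xi>1 A2 \<xi>2 k"
  have "\<xi>1 < dim_row A1"
    using assms(1) unfolding extensible_pair_def marked_diagram_def by auto
  then have "\<xi>1 \<in> B_nodes A1 \<xi>1 A2 \<xi>2 k" and "dim_row A1 \<in> B_nodes A1 \<xi>1 A2 \<xi>2 k"
    and "adjacent ?Z \<xi>1 (dim_row A1)"
    using assms(2) by (auto simp: B_nodes_def adjacent_def Zk_def Let_def)
  moreover have "fund_weight ?Z \<xi>1 - fund_weight ?Z (dim_row A1) \<in> weight_lattice ?Z"
    by (simp add: fund_weight_def weight_lattice_def)
  ultimately have "quotient_cyclic ?Z"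
    using generates_quotient_Zk_adjacent[OF assms(1,2)] unfolding quotient_cyclic_def by blast
  then show ?thesis
    using generates_quotient_Zk_adjacent[OF assms(1,2)] by blast
qed

end
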